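(* Let $x_0<\dots<x_n$ and $\hat x_0<\dots<\hat x_n$ be real numbers with $\hat x_0=x_0$, $\hat x_n=x_n$, let $\mathbf{y}\in\mathbb{R}^{n+1}$, $z_k=z_k(\mathbf{x},\hat{\mathbf{x}})$, $\hat c_k:=(\hat x_{k-1}+\hat x_k)/2$ for $1\le k\le n$, and $\hat{\mathbf{v}}:=\{\hat x_k:0\le k\le n\}\cup\{\hat c_k:1\le k\le n\}$. Then \[ \max_{x_0\le t\le x_n}|E(t;\mathbf{y},\mathbf{z})|\le\Lambda(\hat{\mathbf{v}})\max_{1\le k\le n}|E(\hat c_k;\mathbf{y},\mathbf{z})|. \]
   Context: $\lambda_k(\mathbf{x}):=1/\prod_{j\neq k}(x_k-x_j)$; $z_k(\mathbf{x},\hat{\mathbf{x}}):=(\lambda_k(\mathbf{x})-\lambda_k(\hat{\mathbf{x}}))/\lambda_k(\hat{\mathbf{x}})$. For $\mathbf{v}\in\mathbb{R}^{n+1}$, $P_{\mathbf{v}}$ is the polynomial of degree $\le n$ with $P_{\mathbf{v}}(\hat x_k)=v_k$; $E(t;\mathbf{y},\mathbf{z}):=P_{\mathbf{y}\mathbf{z}}(t)-P_{\mathbf{y}}(t)P_{\mathbf{z}}(t)$ with $(\mathbf{yz})_k=y_kz_k$. For a finite set of distinct points $\mathbf{u}\subset[x_0,x_n]$, $\Lambda(\mathbf{u}):=\max_{t\in[x_0,x_n]}\sum_{u\in\mathbf{u}}|\ell_u(t)|$, where $\ell_u$ are the Lagrange polynomials for polynomial interpolation at the points of $\mathbf{u}$.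 *)

theory Defs
  imports Complex_Main
begin

text \<open>Nodes are given as functions nat => real, relevant on indices 0..n.\<close>

definition bary_weight :: "nat \<Rightarrow> (nat \<Rightarrow> real) \<Rightarrow> nat \<Rightarrow> real" where
  "bary_weight n x k = 1 / (\<Prod>j\<in>{0..n} - {k}. (x k - x j))"

definition zrel :: "nat \<Rightarrow> (nat \<Rightarrow> real) \<Rightarrow> (nat \<Rightarrow> real) \<Rightarrow> nat \<Rightarrow> real" where
  "zrel n x xh k = (bary_weight n x k - bary_weight n xh k) / bary_weight n xh k"

definition lagrange_set :: "real set \<Rightarrow> real \<Rightarrow> real \<Rightarrow> real" where
  "lagrange_set U u t = (\<Prod>w\<in>U - {u}. (t - w) / (u - w))"

definition interp :: "nat \<Rightarrow> (nat \<Rightarrow> real) \<Rightarrow> (nat \<Rightarrow> real) \<Rightarrow> real \<Rightarrow> real" where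
  "interp n xh v t = (\<Sum>k\<in>{0..n}. v k * (\<Prod>j\<in>{0..n} - {k}. (t - xh j) / (xh k - xh j)))"

definition interp_err :: "nat \<Rightarrow> (nat \<Rightarrow> real) \<Rightarrow> real \<Rightarrow> (nat \<Rightarrow> real) \<Rightarrow> (nat \<Rightarrow> real) \<Rightarrow> real" where
  "interp_err n xh t y z = interp n xh (\<lambda>k. y k * z k) t - interp n xh y t * interp n xh z t"

definition lebesgue_const :: "real \<Rightarrow> real \<Rightarrow> real set \<Rightarrow> real" where
  "lebesgue_const a b U = (SUP t\<in>{a..b}. (\<Sum>u\<in>U. \<bar>lagrange_set U u t\<bar>))"

end

theory Submission
  imports Defs "HOL-Computational_Algebra.Polynomial"
begin

text \<open>The error \<open>E(t; y, z) = P_{yz}(t) - P_y(t) P_z(t)\<close> is a polynomial of degree at most \<open>2n\<close>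
  vanishing at every node \<open>xh k\<close>, whatever \<open>z\<close> is. The \<open>2n + 1\<close> points of \<open>v\<close> are therefore
  unisolvent for it, so \<open>E\<close> equals its own Lagrange interpolant at \<open>v\<close>, whose values are
  \<open>0\<close> at the nodes and \<open>E(c_k)\<close> at the midpoints; bounding the basis functions by the
  Lebesgue constant gives the claim.\<close>

definition lagrange_basis_poly :: "'b set \<Rightarrow> ('b \<Rightarrow> real) \<Rightarrow> 'b \<Rightarrow> real poly" where
  "lagrange_basis_poly J a k = (\<Prod>j\<in>J - {k}. [:- a j / (a k - a j), 1 / (a k - a j):])"

lemma poly_lagrange_basis_poly:
  "poly (lagrange_basis_poly J a k) t = (\<Prod>j\<in>J - {k}. (t - a j) / (a k - a j))"
  unfolding lagrange_basis_poly_def poly_prod by (intro prod.cong) (auto simp: diff_divide_distrib)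

lemma degree_lagrange_basis_poly:
  assumes "finite J" "k \<in> J"
  shows "degree (lagrange_basis_poly J a k) \<le> card J - 1"
proof -
  have "degree (lagrange_basis_poly J a k)
          \<le> sum (degree \<circ> (\<lambda>j. [:- a j / (a k - a j), 1 / (a k - a j):])) (J - {k})"
    unfolding lagrange_basis_poly_def using assms(1) by (intro degree_prod_sum_le) auto
  also have "\<dots> \<le> (\<Sum>j\<in>J - {k}. 1)"
    by (intro sum_mono) auto
  also have "\<dots> = card J - 1"
    using assms by (simp add: card_Diff_singleton_if)
  finally show ?thesis .
qed

lemma lagrange_set_at_node:
  assumes "finite U" "u \<in> U" "v \<in> U"
  shows "lagrange_set U u v = (if v = u then 1 else 0)"
  using assms by (auto simp: lagrange_set_def intro!: prod.neutral)

lemma poly_eq_lagrange_sum: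
  fixes p :: "real poly"
  assumes "finite U" "degree p < card U"
  shows "poly p t = (\<Sum>u\<in>U. poly p u * lagrange_set U u t)"
proof -
  define L where "L = (\<Sum>u\<in>U. smult (poly p u) (lagrange_basis_poly U id u))"
  have poly_L: "poly L s = (\<Sum>u\<in>U. poly p u * lagrange_set U u s)" for s
    unfolding L_def poly_sum lagrange_set_def by (simp add: poly_lagrange_basis_poly)
  have "degree L \<le> card U - 1"
    unfolding L_def using assms(1)
    by (intro degree_sum_le)
       (auto intro!: order.trans[OF degree_smult_le] order.trans[OF degree_lagrange_basis_poly[of U]])
  moreover have "poly p v = poly L v" if "v \<in> U" for v
  proof -
    have "poly L v = (\<Sum>u\<in>U. if u = v then poly p u else 0)"
      unfolding poly_L using that assms(1) by (intro sum.cong) (auto simp: lagrange_set_at_node)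
    then show ?thesis using that assms(1) by simp
  qed
  ultimately have "p = L"
    using assms by (intro poly_eqI_degree[of U]) auto
  then show ?thesis using poly_L[of t] by simp
qed

lemma abs_poly_le_lebesgue_const:
  fixes p :: "real poly"
  assumes "finite U" "degree p < card U" "t \<in> {a..b}"
    and bound: "\<And>u. u \<in> U \<Longrightarrow> \<bar>poly p u\<bar> \<le> M"
  shows "\<bar>poly p t\<bar> \<le> lebesgue_const a b U * M"
proof -
  define S where "S s = (\<Sum>u\<in>U. \<bar>lagrange_set U u s\<bar>)" for s
  obtain u0 where "u0 \<in> U" using assms(2) by fastforce
  then have M_nonneg: "0 \<le> M" using bound[of u0] by linarith
  have "continuous_on {a..b} S"
    unfolding S_def lagrange_set_def by (intro continuous_intros) auto
  moreover have "a \<le> b" using assms(3) by simp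
  ultimately obtain s where "\<forall>r\<in>{a..b}. S r \<le> S s"
    using continuous_attains_sup[OF compact_Icc] by (metis empty_iff)
  then have bdd: "bdd_above (S ` {a..b})"
    by (intro bdd_aboveI2) blast
  have "\<bar>poly p t\<bar> = \<bar>\<Sum>u\<in>U. poly p u * lagrange_set U u t\<bar>"
    using poly_eq_lagrange_sum[OF assms(1,2), of t] by simp
  also have "\<dots> \<le> (\<Sum>u\<in>U. \<bar>poly p u\<bar> * \<bar>lagrange_set U u t\<bar>)"
    by (rule order.trans[OF sum_abs]) (simp add: abs_mult)
  also have "\<dots> \<le> (\<Sum>u\<in>U. M * \<bar>lagrange_set U u t\<bar>)"
    by (intro sum_mono mult_right_mono bound) auto
  also have "\<dots> = S t * M"
    by (simp add: S_def sum_distrib_left mult.commute)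
  also have "\<dots> \<le> lebesgue_const a b U * M"
    unfolding lebesgue_const_def S_def[symmetric]
    by (intro mult_right_mono M_nonneg cSUP_upper assms(3) bdd)
  finally show ?thesis .
qed

definition interp_poly :: "nat \<Rightarrow> (nat \<Rightarrow> real) \<Rightarrow> (nat \<Rightarrow> real) \<Rightarrow> real poly" where
  "interp_poly n xh v = (\<Sum>k\<in>{0..n}. smult (v k) (lagrange_basis_poly {0..n} xh k))"

lemma poly_interp_poly: "poly (interp_poly n xh v) t = interp n xh v t"
  unfolding interp_poly_def interp_def poly_sum by (simp add: poly_lagrange_basis_poly)

lemma degree_interp_poly: "degree (interp_poly n xh v) \<le> n"
  unfolding interp_poly_def
  by (intro degree_sum_le)
     (auto intro!: order.trans[OF degree_smult_le] order.trans[OF degree_lagrange_basis_poly])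

lemma interp_at_node:
  assumes "inj_on xh {0..n}" "i \<le> n"
  shows "interp n xh v (xh i) = v i"
proof -
  have basis: "(\<Prod>j\<in>{0..n} - {k}. (xh i - xh j) / (xh k - xh j)) = (if k = i then 1 else 0)"
    if "k \<le> n" for k
    using assms that by (auto simp: inj_on_eq_iff intro!: prod.neutral)
  have "interp n xh v (xh i) = (\<Sum>k\<in>{0..n}. if k = i then v k else 0)"
    unfolding interp_def by (intro sum.cong) (auto simp: basis)
  then show ?thesis
    using assms(2) by simp
qed

definition interp_err_poly :: "nat \<Rightarrow> (nat \<Rightarrow> real) \<Rightarrow> (nat \<Rightarrow> real) \<Rightarrow> (nat \<Rightarrow> real) \<Rightarrow> real poly" where
  "interp_err_poly n xh y z =
     interp_poly n xh (\<lambda>k. y k * z k) - interp_poly n xh y * interp_poly n xh z"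

lemma poly_interp_err_poly: "poly (interp_err_poly n xh y z) t = interp_err n xh t y z"
  by (simp add: interp_err_poly_def interp_err_def poly_interp_poly)

lemma degree_interp_err_poly: "degree (interp_err_poly n xh y z) \<le> 2 * n"
proof -
  have "degree (interp_poly n xh y * interp_poly n xh z) \<le> n + n"
    by (intro order.trans[OF degree_mult_le] add_mono degree_interp_poly)
  then show ?thesis
    unfolding interp_err_poly_def
    using degree_interp_poly[of n xh "\<lambda>k. y k * z k"]
    by (intro order.trans[OF degree_diff_le_max]) auto
qed

lemma interp_err_at_node:
  assumes "inj_on xh {0..n}" "i \<le> n"
  shows "interp_err n xh (xh i) y z = 0"
  using assms by (simp add: interp_err_def interp_at_node)

lemma inj_on_increasing_nodes:
  fixes xh :: "nat \<Rightarrow> 'a::linorder"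
  assumes "\<And>i j. i < j \<Longrightarrow> j \<le> n \<Longrightarrow> xh i < xh j"
  shows "inj_on xh {0..n}"
  by (intro inj_onI) (metis assms atLeastAtMost_iff less_irrefl linorder_neqE_nat)

lemma card_nodes_midpoints:
  fixes xh :: "nat \<Rightarrow> 'a::linordered_field"
  assumes mono: "\<And>i j. i < j \<Longrightarrow> j \<le> n \<Longrightarrow> xh i < xh j"
  shows "card (xh ` {0..n} \<union> (\<lambda>k. (xh (k - 1) + xh k) / 2) ` {1..n}) = 2 * n + 1"
proof -
  define c where "c k = (xh (k - 1) + xh k) / 2" for k
  have mono_le: "xh i \<le> xh j" if "i \<le> j" "j \<le> n" for i j
    using mono[of i j] that by (cases "i = j") auto
  have c_between: "xh (k - 1) < c k" "c k < xh k" if "k \<in> {1..n}" for k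
    using mono[of "k - 1" k] that by (auto simp: c_def)
  have "inj_on xh {0..n}"
    using mono by (rule inj_on_increasing_nodes)
  moreover have "inj_on c {1..n}"
  proof (intro inj_onI)
    have "c k < c l" if "k \<in> {1..n}" "l \<in> {1..n}" "k < l" for k l
    proof -
      have "xh (k - 1) < xh (l - 1)" "xh k < xh l"
        using mono that by auto
      then show ?thesis by (simp add: c_def)
    qed
    then show "k = l" if "k \<in> {1..n}" "l \<in> {1..n}" "c k = c l" for k l
      using that by (metis less_irrefl linorder_neqE_nat)
  qed
  moreover have "xh ` {0..n} \<inter> c ` {1..n} = {}"
  proof -
    have "xh i \<noteq> c k" if "i \<le> n" "k \<in> {1..n}" for i k
    proof (cases "i < k")
      case True
      then have "xh i \<le> xh (k - 1)" using that by (intro mono_le) auto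
      then show ?thesis using c_between[OF that(2)] by simp
    next
      case False
      then have "xh k \<le> xh i" using that by (intro mono_le) auto
      then show ?thesis using c_between[OF that(2)] by simp
    qed
    then show ?thesis by auto
  qed
  ultimately show ?thesis
    unfolding c_def[symmetric] by (simp add: card_Un_disjoint card_image)
qed

theorem lemma3:
  fixes n :: nat and x xh y :: "nat \<Rightarrow> real"
  assumes "n \<ge> 1"
    and "\<And>i j. i < j \<Longrightarrow> j \<le> n \<Longrightarrow> x i < x j"
    and "\<And>i j. i < j \<Longrightarrow> j \<le> n \<Longrightarrow> xh i < xh j"
    and "xh 0 = x 0" and "xh n = x n"
  shows "\<forall>t\<in>{x 0..x n}.
           \<bar>interp_err n xh t y (zrel n x xh)\<bar>
           \<le> lebesgue_const (x 0) (x n)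
                ((xh ` {0..n}) \<union> ((\<lambda>k. (xh (k - 1) + xh k) / 2) ` {1..n}))
             * Max ((\<lambda>k. \<bar>interp_err n xh ((xh (k - 1) + xh k) / 2) y (zrel n x xh)\<bar>) ` {1..n})"
proof
  fix t assume t: "t \<in> {x 0..x n}"
  define c where "c k = (xh (k - 1) + xh k) / 2" for k
  define E where "E = interp_err_poly n xh y (zrel n x xh)"
  define M where "M = Max ((\<lambda>k. \<bar>poly E (c k)\<bar>) ` {1..n})"
  define V where "V = xh ` {0..n} \<union> c ` {1..n}"
  have "inj_on xh {0..n}"
    using assms(3) by (rule inj_on_increasing_nodes)
  then have at_nodes: "poly E (xh i) = 0" if "i \<le> n" for i
    using that by (simp add: E_def poly_interp_err_poly interp_err_at_node)
  have at_midpoints: "\<bar>poly E (c k)\<bar> \<le> M" if "k \<in> {1..n}" for k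
    unfolding M_def using that by (intro Max_ge) auto
  then have "0 \<le> M"
    using assms(1) by (meson abs_ge_zero atLeastAtMost_iff order_refl order.trans)
  with at_nodes at_midpoints have "\<bar>poly E u\<bar> \<le> M" if "u \<in> V" for u
    using that by (auto simp: V_def)
  moreover have "card V = 2 * n + 1"
    unfolding V_def c_def by (rule card_nodes_midpoints) (rule assms(3))
  then have "degree E < card V"
    using degree_interp_err_poly[of n xh y "zrel n x xh"] by (simp add: E_def)
  ultimately have "\<bar>poly E t\<bar> \<le> lebesgue_const (x 0) (x n) V * M"
    by (intro abs_poly_le_lebesgue_const t) (auto simp: V_def)
  then show "\<bar>interp_err n xh t y (zrel n x xh)\<bar>
           \<le> lebesgue_const (x 0) (x n)
                ((xh ` {0..n}) \<union> ((\<lambda>k. (xh (k - 1) + xh k) / 2) ` {1..n}))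
             * Max ((\<lambda>k. \<bar>interp_err n xh ((xh (k - 1) + xh k) / 2) y (zrel n x xh)\<bar>) ` {1..n})"
    by (simp add: E_def M_def V_def c_def poly_interp_err_poly)
qed

end
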